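(* Let $s\le k$ be positive integers and let $\tau_1,\dots,\tau_k\in(0,1]$ be distinct abscissae. Let $\omega_1,\dots,\omega_k$ be the weights of the interpolatory quadrature formula on $[0,1]$ based at these abscissae, i.e. $\omega_j=\int_0^1\ell_j(x)\,\mathrm{d}x$, where $\ell_j$ is the $j$th Lagrange polynomial of degree $k-1$ on the nodes $\{\tau_i\}$. Assume that this quadrature formula is exact for all polynomials of degree $2s-1$. Let $P_j(t)=\sqrt{2j-1}\,\hat P_{j-1}(t)$, $j\ge1$, where $\hat P_{j-1}$ is the shifted Legendre polynomial of degree $j-1$ on $[0,1]$ (so that $\int_0^1P_iP_j\,\mathrm{d}t=\delta_{ij}$). Define $\Omega=\mathrm{diag}(\omega_1,\dots,\omega_k)$ and the $k\times s$ matrices $\mathcal I_s,\mathcal P_s$ with entries $(\mathcal I_s)_{ij}=\int_0^{\tau_i}P_j(x)\,\mathrm{d}x$ and $(\mathcal P_s)_{ij}=P_j(\tau_i)$, and let $$A=\mathcal I_s\,\mathcal P_s^T\,\Omega\in\mathbb R^{k\times k}.$$ Then the nonzero eigenvalues of $A$ coincide with the eigenvalues of the Butcher matrix of the $s$-stage Gauss-Legendre Runge-Kutta method of order $2s$.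
   Context: The Butcher matrix of the $s$-stage Gauss-Legendre method of order $2s$ is the $s\times s$ matrix with entries $\int_0^{c_i}L_j(x)\,\mathrm{d}x$, where $c_1,\dots,c_s$ are the zeros of the shifted Legendre polynomial of degree $s$ on $[0,1]$ and $L_j$ is the $j$th Lagrange polynomial of degree $s-1$ on these nodes. The matrix $A$ is the Butcher matrix of the Runge-Kutta method called HBVM$(k,s)$ (Hamiltonian Boundary Value Method with $k$ steps and degree $s$) with abscissae $\tau_i$ and weights $\omega_i$. *)

theory Defs
  imports "HOL-Analysis.Analysis" "Jordan_Normal_Form.Char_Poly"
begin

definition shifted_legendre :: "nat \<Rightarrow> real poly" where
  "shifted_legendre n =
     (\<Sum>k\<le>n. monom ((-1)^(n+k) * real (n choose k) * real ((n+k) choose k)) k)"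

text \<open>Normalised Legendre basis, 0-based: column j is sqrt(2j+1) times the
  shifted Legendre polynomial of degree j (the paper's P_(j+1)).\<close>
definition leg_P :: "nat \<Rightarrow> real \<Rightarrow> real" where
  "leg_P j t = sqrt (2 * real j + 1) * poly (shifted_legendre j) t"

definition lagrange_basis :: "(nat \<Rightarrow> real) \<Rightarrow> nat \<Rightarrow> nat \<Rightarrow> real \<Rightarrow> real" where
  "lagrange_basis x n j t = (\<Prod>i\<in>{..<n} - {j}. (t - x i) / (x j - x i))"

definition quad_weight :: "(nat \<Rightarrow> real) \<Rightarrow> nat \<Rightarrow> nat \<Rightarrow> real" where
  "quad_weight tau k j = integral {0..1} (lagrange_basis tau k j)"

definition gauss_nodes :: "nat \<Rightarrow> real list" where
  "gauss_nodes s = sorted_list_of_set {x. poly (shifted_legendre s) x = 0}"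

definition gauss_butcher :: "nat \<Rightarrow> real mat" where
  "gauss_butcher s =
     mat s s (\<lambda>(i,j). integral {0..gauss_nodes s ! i}
                        (lagrange_basis (\<lambda>m. gauss_nodes s ! m) s j))"

definition I_mat :: "(nat \<Rightarrow> real) \<Rightarrow> nat \<Rightarrow> nat \<Rightarrow> real mat" where
  "I_mat tau k s = mat k s (\<lambda>(i,j). integral {0..tau i} (leg_P j))"

definition P_mat :: "(nat \<Rightarrow> real) \<Rightarrow> nat \<Rightarrow> nat \<Rightarrow> real mat" where
  "P_mat tau k s = mat k s (\<lambda>(i,j). leg_P j (tau i))"

definition Omega_mat :: "(nat \<Rightarrow> real) \<Rightarrow> nat \<Rightarrow> real mat" where
  "Omega_mat tau k = mat k k (\<lambda>(i,j). if i = j then quad_weight tau k i else 0)"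

definition hbvm_matrix :: "(nat \<Rightarrow> real) \<Rightarrow> nat \<Rightarrow> nat \<Rightarrow> real mat" where
  "hbvm_matrix tau k s = I_mat tau k s * transpose_mat (P_mat tau k s) * Omega_mat tau k"

end

(* Write A = I_s Y with Y = P_s^T Omega. If the quadrature is exact in degree 2s-1, then
   (Y I_s)_ij = int_0^1 P_i(t) int_0^t P_j, a matrix that does not depend on the abscissae, and
   I_s Y and Y I_s have the same nonzero eigenvalues. The Gauss-Legendre nodes, i.e. the s zeros of
   the shifted Legendre polynomial (all in (0,1) by Rolle's theorem applied to Rodrigues' formula),
   carry such a quadrature with k = s; for them A is the Gauss Butcher matrix, since the Legendre
   coefficients of the Lagrange polynomial l_j are omega_j P_m(c_j). Finally the Gauss Butcher
   matrix is nonsingular, so none of its eigenvalues is zero. *)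

theory Submission
  imports Defs
begin

definition poly_antideriv :: "'a::field_char_0 poly \<Rightarrow> 'a poly" where
  "poly_antideriv p = (\<Sum>i\<le>degree p. monom (coeff p i / of_nat (Suc i)) (Suc i))"

lemma coeff_poly_antideriv:
  "coeff (poly_antideriv p) i = (if i = 0 then 0 else coeff p (i - 1) / of_nat i)"
proof (cases i)
  case (Suc m)
  have "coeff (poly_antideriv p) i = (\<Sum>k\<le>degree p. if k = m then coeff p k / of_nat (Suc k) else 0)"
    by (simp add: poly_antideriv_def coeff_sum coeff_monom Suc)
  also have "\<dots> = coeff p m / of_nat (Suc m)"
    using coeff_eq_0[of p m] by (auto simp: sum.delta')
  finally show ?thesis by (simp add: Suc)
qed (simp add: poly_antideriv_def coeff_sum coeff_monom)

lemma pderiv_poly_antideriv [simp]: "pderiv (poly_antideriv p) = p"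
  by (rule poly_eqI) (simp add: coeff_pderiv coeff_poly_antideriv del: of_nat_Suc)

lemma poly_antideriv_at_0 [simp]: "poly (poly_antideriv p) 0 = 0"
  by (simp add: poly_0_coeff_0 coeff_poly_antideriv)

lemma degree_poly_antideriv: "degree (poly_antideriv p) \<le> degree p + 1"
  unfolding poly_antideriv_def
  by (rule degree_sum_le) (auto intro: order.trans[OF degree_monom_le])

lemma poly_antideriv_add: "poly_antideriv (p + q) = poly_antideriv p + poly_antideriv q"
  by (rule poly_eqI) (simp add: coeff_poly_antideriv add_divide_distrib)

lemma poly_antideriv_smult: "poly_antideriv (Polynomial.smult c p) = Polynomial.smult c (poly_antideriv p)"
  by (rule poly_eqI) (simp add: coeff_poly_antideriv)

lemma poly_antideriv_0 [simp]: "poly_antideriv 0 = 0"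
  by (simp add: poly_antideriv_def)

lemma poly_antideriv_sum: "poly_antideriv (sum f A) = (\<Sum>x\<in>A. poly_antideriv (f x))"
  by (induction A rule: infinite_finite_induct) (simp_all add: poly_antideriv_add)

lemma integral_poly_pderiv:
  fixes P :: "real poly"
  assumes "a \<le> b"
  shows "integral {a..b} (poly (pderiv P)) = poly P b - poly P a"
proof (rule integral_unique, rule fundamental_theorem_of_calculus[OF assms])
  fix x
  show "(poly P has_vector_derivative poly (pderiv P) x) (at x within {a..b})"
    using poly_DERIV[of P x]
    by (simp add: has_real_derivative_iff_has_vector_derivative has_vector_derivative_at_within)
qed

lemma integral_poly_eq_antideriv:
  fixes p :: "real poly"
  shows "0 \<le> t \<Longrightarrow> integral {0..t} (poly p) = poly (poly_antideriv p) t"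
  using integral_poly_pderiv[of 0 t "poly_antideriv p"] by simp

definition integral01 :: "real poly \<Rightarrow> real" where
  "integral01 p = integral {0..1} (poly p)"

lemma integral01_eq_antideriv: "integral01 p = poly (poly_antideriv p) 1"
  by (simp add: integral01_def integral_poly_eq_antideriv)

lemma integral01_pderiv: "integral01 (pderiv P) = poly P 1 - poly P 0"
  by (simp add: integral01_def integral_poly_pderiv)

lemma integral01_0 [simp]: "integral01 0 = 0"
  by (simp add: integral01_eq_antideriv)

lemma integral01_add: "integral01 (p + q) = integral01 p + integral01 q"
  by (simp add: integral01_eq_antideriv poly_antideriv_add)

lemma integral01_diff: "integral01 (p - q) = integral01 p - integral01 q"
  using integral01_add[of "p - q" q] by simp

lemma integral01_smult: "integral01 (Polynomial.smult c p) = c * integral01 p"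
  by (simp add: integral01_eq_antideriv poly_antideriv_smult)

lemma integral01_sum: "integral01 (sum f A) = (\<Sum>x\<in>A. integral01 (f x))"
  by (simp add: integral01_eq_antideriv poly_antideriv_sum poly_sum)

lemma integral01_by_parts:
  "integral01 (pderiv f * g) = poly f 1 * poly g 1 - poly f 0 * poly g 0 - integral01 (f * pderiv g)"
proof -
  have "integral01 (pderiv f * g) = integral01 (pderiv (f * g)) - integral01 (f * pderiv g)"
    by (simp add: pderiv_mult algebra_simps flip: integral01_diff)
  then show ?thesis by (simp add: integral01_pderiv)
qed


definition rodrigues_poly :: "nat \<Rightarrow> real poly" where
  "rodrigues_poly n = ([:0, 1:] * [:-1, 1:]) ^ n"

lemma rodrigues_poly_altdef: "rodrigues_poly n = monom 1 n * [:-1, 1:] ^ n"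
  by (simp only: rodrigues_poly_def power_mult_distrib) (simp add: monom_altdef)

lemma coeff_rodrigues_poly:
  "coeff (rodrigues_poly n) (i + n) = (if i \<le> n then (-1) ^ (n - i) * real (n choose i) else 0)"
proof -
  have "coeff (rodrigues_poly n) (i + n) = coeff ([:-1, 1:] ^ n) i"
    by (simp add: rodrigues_poly_altdef coeff_monom_mult)
  also have "\<dots> = (if i \<le> n then (-1) ^ (n - i) * real (n choose i) else 0)"
    by (auto simp: coeff_linear_poly_power coeff_eq_0 degree_linear_power)
  finally show ?thesis .
qed

lemma pochhammer_of_nat_Suc:
  "pochhammer (of_nat (Suc i) :: 'a::field_char_0) n = fact (i + n) / fact i"
proof -
  have "fact (i + n) = (fact i * pochhammer (of_nat (Suc i)) n :: 'a)"
    by (simp add: pochhammer_fact pochhammer_product' add.commute)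
  then show ?thesis by simp
qed

lemma shifted_legendre_rodrigues:
  "shifted_legendre n = Polynomial.smult (1 / fact n) ((pderiv ^^ n) (rodrigues_poly n))"
proof (rule poly_eqI)
  fix i
  have "(-1::real) ^ (n + i) = (-1) ^ (n - i)" if "i \<le> n"
  proof -
    have "n + i = (n - i) + 2 * i" using that by simp
    then show ?thesis by (simp only: power_add power_mult) simp
  qed
  then show "coeff (shifted_legendre n) i =
      coeff (Polynomial.smult (1 / fact n) ((pderiv ^^ n) (rodrigues_poly n))) i"
    by (simp add: shifted_legendre_def coeff_sum coeff_monom coeff_higher_pderiv
        pochhammer_of_nat_Suc coeff_rodrigues_poly binomial_fact add.commute[of n i]
        del: of_nat_Suc)
qed

lemma higher_pderiv_rodrigues_poly_factor:
  assumes "j \<le> n"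
  obtains S where "(pderiv ^^ j) (rodrigues_poly n) = ([:0, 1:] * [:-1, 1:]) ^ (n - j) * S"
  using assms
proof (induction j arbitrary: thesis)
  case 0
  then show ?case by (auto simp: rodrigues_poly_def)
next
  case (Suc j)
  define q :: "real poly" where "q = [:0, 1:] * [:-1, 1:]"
  obtain S where S: "(pderiv ^^ j) (rodrigues_poly n) = q ^ Suc (n - Suc j) * S"
    using Suc.IH Suc.prems(2) by (metis Suc_diff_le Suc_leD diff_Suc_Suc q_def)
  define m where "m = n - Suc j"
  have "(pderiv ^^ Suc j) (rodrigues_poly n) = pderiv (q ^ Suc m * S)"
    by (simp add: S m_def)
  also have "\<dots> = q ^ Suc m * pderiv S + S * (Polynomial.smult (of_nat (Suc m)) (q ^ m) * pderiv q)"
    by (simp only: pderiv_mult pderiv_power_Suc)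
  also have "\<dots> = q ^ m * (q * pderiv S + Polynomial.smult (of_nat (Suc m)) (pderiv q) * S)"
    by (simp only: power_Suc) (simp add: algebra_simps)
  finally show ?case using Suc.prems(1) q_def m_def by blast
qed

lemma poly_higher_pderiv_rodrigues_poly_ends:
  assumes "j < n"
  shows "poly ((pderiv ^^ j) (rodrigues_poly n)) 0 = 0"
    and "poly ((pderiv ^^ j) (rodrigues_poly n)) 1 = 0"
proof -
  obtain S where S: "(pderiv ^^ j) (rodrigues_poly n) = ([:0, 1:] * [:-1, 1:]) ^ (n - j) * S"
    using higher_pderiv_rodrigues_poly_factor[of j n] assms by auto
  show "poly ((pderiv ^^ j) (rodrigues_poly n)) 0 = 0" "poly ((pderiv ^^ j) (rodrigues_poly n)) 1 = 0"
    using assms by (simp_all add: S)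
qed

text \<open>The boundary terms of each integration by parts vanish because [t (t - 1)] still divides
  the lower derivatives of [rodrigues_poly n].\<close>
lemma integral01_higher_pderiv_rodrigues_poly:
  assumes "a \<le> n"
  shows "integral01 (g * (pderiv ^^ a) (rodrigues_poly n))
       = (-1) ^ a * integral01 ((pderiv ^^ a) g * rodrigues_poly n)"
  using assms
proof (induction a arbitrary: g)
  case (Suc a)
  define f where "f = (pderiv ^^ a) (rodrigues_poly n)"
  have "integral01 (g * (pderiv ^^ Suc a) (rodrigues_poly n)) = integral01 (pderiv f * g)"
    by (simp add: f_def mult.commute)
  also have "\<dots> = - integral01 (pderiv g * f)"
    using poly_higher_pderiv_rodrigues_poly_ends[of a n] Suc.prems
    by (simp add: integral01_by_parts f_def mult.commute)
  also have "\<dots> = (-1) ^ Suc a * integral01 ((pderiv ^^ Suc a) g * rodrigues_poly n)"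
    using Suc.prems by (simp add: f_def Suc.IH funpow_Suc_right del: funpow.simps)
  finally show ?case .
qed simp

lemma integral01_monom_mult_linear_power:
  "integral01 (monom 1 a * [:-1, 1:] ^ b) = (-1) ^ b * fact a * fact b / fact (a + b + 1)"
proof (induction b arbitrary: a)
  case 0
  have "integral01 (monom 1 a) = 1 / real (Suc a)"
    using integral01_pderiv[of "monom (1 / real (Suc a)) (Suc a)"]
    by (simp add: pderiv_monom poly_monom del: of_nat_Suc)
  then show ?case by simp
next
  case (Suc b)
  define F where "F = monom (1 / real (Suc a)) (Suc a)"
  have "integral01 (monom 1 a * [:-1, 1:] ^ Suc b) = integral01 (pderiv F * [:-1, 1:] ^ Suc b)"
    by (simp add: F_def pderiv_monom del: of_nat_Suc)
  also have "\<dots> = - integral01 (F * pderiv ([:-1, 1:] ^ Suc b))"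
    by (simp add: integral01_by_parts F_def poly_monom)
  also have "F * pderiv ([:-1, 1:] ^ Suc b)
      = Polynomial.smult (real (Suc b) / real (Suc a)) (monom 1 (Suc a) * [:-1, 1:] ^ b)"
  proof -
    have "pderiv ([:-1, 1:] ^ Suc b) = Polynomial.smult (real (Suc b)) ([:-1, 1:] ^ b)"
      by (simp only: pderiv_power_Suc) (simp add: pderiv_pCons)
    then show ?thesis by (simp add: F_def smult_monom monom_altdef del: of_nat_Suc)
  qed
  finally show ?case
    by (simp add: integral01_smult Suc.IH field_simps del: of_nat_Suc)
qed

lemma higher_pderiv_eq_0:
  assumes "degree p < n"
  shows "(pderiv ^^ n) p = 0"
  by (rule poly_eqI) (use assms in \<open>simp add: coeff_higher_pderiv coeff_eq_0\<close>)

lemma higher_pderiv_degree: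
  assumes "degree p \<le> n"
  shows "(pderiv ^^ n) p = [:fact n * coeff p n:]"
proof (rule poly_eqI)
  fix i
  show "coeff ((pderiv ^^ n) p) i = coeff [:fact n * coeff p n:] i"
    using assms by (cases i) (simp_all add: coeff_higher_pderiv pochhammer_fact coeff_eq_0)
qed

lemma coeff_shifted_legendre:
  "coeff (shifted_legendre n) i =
     (if i \<le> n then (-1) ^ (n + i) * real (n choose i) * real ((n + i) choose i) else 0)"
  by (simp add: shifted_legendre_def coeff_sum coeff_monom sum.delta')

lemma lead_coeff_shifted_legendre: "coeff (shifted_legendre n) n = real ((2 * n) choose n)"
  by (simp add: coeff_shifted_legendre mult_2)

lemma degree_shifted_legendre [simp]: "degree (shifted_legendre n) = n"
proof (rule antisym)
  show "degree (shifted_legendre n) \<le> n"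
    by (rule degree_le) (simp add: coeff_shifted_legendre)
  show "n \<le> degree (shifted_legendre n)"
    by (rule le_degree) (simp add: lead_coeff_shifted_legendre)
qed

lemma shifted_legendre_nonzero: "shifted_legendre n \<noteq> 0"
  using lead_coeff_shifted_legendre[of n] by auto

lemma integral01_mult_shifted_legendre_eq_0:
  assumes "degree g < n"
  shows "integral01 (g * shifted_legendre n) = 0"
  using integral01_higher_pderiv_rodrigues_poly[of n n g] higher_pderiv_eq_0[OF assms]
  by (simp add: shifted_legendre_rodrigues integral01_smult)

lemma integral01_shifted_legendre_square:
  "integral01 (shifted_legendre n * shifted_legendre n) = 1 / (2 * real n + 1)"
proof -
  define L where "L = shifted_legendre n"
  have "integral01 (L * L) = 1 / fact n * integral01 (L * (pderiv ^^ n) (rodrigues_poly n))"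
    by (subst (2) L_def, subst shifted_legendre_rodrigues) (simp add: integral01_smult)
  also have "\<dots> = (-1) ^ n / fact n * integral01 ((pderiv ^^ n) L * rodrigues_poly n)"
    by (simp add: integral01_higher_pderiv_rodrigues_poly)
  also have "(pderiv ^^ n) L = [:fact n * real ((2 * n) choose n):]"
    by (simp add: higher_pderiv_degree L_def lead_coeff_shifted_legendre)
  also have "integral01 ([:fact n * real ((2 * n) choose n):] * rodrigues_poly n)
      = fact n * real ((2 * n) choose n) * ((-1) ^ n * fact n * fact n / fact (2 * n + 1))"
    by (simp add: integral01_smult rodrigues_poly_altdef integral01_monom_mult_linear_power mult_2
        del: fact_Suc)
  also have "(-1) ^ n / fact n * (fact n * real ((2 * n) choose n) * ((-1) ^ n * fact n * fact n / fact (2 * n + 1)))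
      = ((-1) ^ n * (-1) ^ n) * (real ((2 * n) choose n) * fact n * fact n) / (fact (2 * n + 1) :: real)"
    by simp
  also have "real ((2 * n) choose n) * fact n * fact n = fact (2 * n)"
    by (simp add: binomial_fact mult_2)
  also have "fact (2 * n + 1) = (2 * real n + 1) * fact (2 * n)"
    by simp
  finally show ?thesis
    by (simp add: L_def flip: power_add del: fact_Suc)
qed

lemma pderiv_roots_between_roots:
  fixes p :: "real poly"
  assumes "finite Z" "card Z = Suc m" "Z \<subseteq> {a..b}" "\<And>z. z \<in> Z \<Longrightarrow> poly p z = 0"
  obtains W where "finite W" "card W = m" "W \<subseteq> {a<..<b}" "\<And>w. w \<in> W \<Longrightarrow> poly (pderiv p) w = 0"
  using assms
proof (induction m arbitrary: Z b thesis)
  case 0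
  from "0.prems"(1)[of "{}"] show ?case by simp
next
  case (Suc m)
  define z1 where "z1 = Max Z"
  define Z' where "Z' = Z - {z1}"
  have "Z \<noteq> {}" using Suc.prems(3) by auto
  then have z1: "z1 \<in> Z" using Suc.prems(2) by (simp add: z1_def)
  have Z': "finite Z'" "card Z' = Suc m" using Suc.prems(2,3) z1 by (auto simp: Z'_def)
  then have "Z' \<noteq> {}" by auto
  define z2 where "z2 = Max Z'"
  have z2: "z2 \<in> Z'" using Z' \<open>Z' \<noteq> {}\<close> by (simp add: z2_def)
  have "z2 < z1"
    using z2 Suc.prems(2) by (auto simp: Z'_def z1_def less_le)
  have "Z' \<subseteq> Z" by (auto simp: Z'_def)
  then have "Z' \<subseteq> {a..z2}"
    using Suc.prems(4) Max_ge[OF Z'(1)] unfolding z2_def by fastforce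
  then obtain W where W: "finite W" "card W = m" "W \<subseteq> {a<..<z2}"
      "\<And>w. w \<in> W \<Longrightarrow> poly (pderiv p) w = 0"
    using Suc.IH[OF _ Z'] Suc.prems(5) by (auto simp: Z'_def)
  obtain w where w: "z2 < w" "w < z1" "poly p z1 - poly p z2 = (z1 - z2) * poly (pderiv p) w"
    using poly_MVT[OF \<open>z2 < z1\<close>] by blast
  have "poly (pderiv p) w = 0"
    using w(3) \<open>z2 < z1\<close> Suc.prems(5) z1 z2 by (simp add: Z'_def)
  moreover have "w \<notin> W" "a \<le> z2" "z1 \<le> b"
    using W(3) w(1) \<open>Z' \<subseteq> {a..z2}\<close> z2 z1 Suc.prems(4) by auto
  ultimately show ?case
    using W w by (intro Suc.prems(1)[of "insert w W"]) auto
qed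

text \<open>The [j]-th derivative also vanishes at [0] and [1], so Rolle's theorem gives [j + 1]
  interior zeros of the next one.\<close>
lemma higher_pderiv_rodrigues_poly_roots:
  assumes "j \<le> n"
  obtains Z where "finite Z" "card Z = j" "Z \<subseteq> {0<..<1}"
    "\<And>z. z \<in> Z \<Longrightarrow> poly ((pderiv ^^ j) (rodrigues_poly n)) z = 0"
  using assms
proof (induction j arbitrary: thesis)
  case 0
  from "0.prems"(1)[of "{}"] show ?case by simp
next
  case (Suc j)
  then obtain Z where Z: "finite Z" "card Z = j" "Z \<subseteq> {0<..<1}"
      "\<And>z. z \<in> Z \<Longrightarrow> poly ((pderiv ^^ j) (rodrigues_poly n)) z = 0"
    by (metis Suc_leD)
  have card: "card (insert 0 (insert 1 Z)) = Suc (Suc j)"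
    using Z by (auto simp: card_insert_if)
  have roots: "poly ((pderiv ^^ j) (rodrigues_poly n)) z = 0" if "z \<in> insert 0 (insert 1 Z)" for z
    using that Z(4) poly_higher_pderiv_rodrigues_poly_ends[of j n] Suc.prems(2) by auto
  obtain W where "finite W" "card W = Suc j" "W \<subseteq> {0<..<1}"
      "\<And>w. w \<in> W \<Longrightarrow> poly (pderiv ((pderiv ^^ j) (rodrigues_poly n))) w = 0"
    by (rule pderiv_roots_between_roots[of _ _ 0 1, OF _ card _ roots]) (use Z in auto)
  then show ?case
    using Suc.prems(1) by simp
qed

lemma shifted_legendre_roots:
  "card {x. poly (shifted_legendre n) x = 0} = n"
  "{x. poly (shifted_legendre n) x = 0} \<subseteq> {0<..<1}"
proof -
  let ?Z = "{x. poly (shifted_legendre n) x = 0}"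
  obtain Z where Z: "finite Z" "card Z = n" "Z \<subseteq> {0<..<1}"
      "\<And>z. z \<in> Z \<Longrightarrow> poly ((pderiv ^^ n) (rodrigues_poly n)) z = 0"
    using higher_pderiv_rodrigues_poly_roots[of n n] by auto
  have "Z \<subseteq> ?Z"
    using Z(4) by (auto simp: shifted_legendre_rodrigues)
  moreover have "finite ?Z" "card ?Z \<le> n"
    using poly_roots_finite[OF shifted_legendre_nonzero] card_poly_roots_bound[OF shifted_legendre_nonzero]
    by simp_all
  ultimately have "Z = ?Z"
    using Z(2) by (intro card_seteq) simp_all
  then show "card ?Z = n" "?Z \<subseteq> {0<..<1}"
    using Z by auto
qed

definition lagrange_poly :: "(nat \<Rightarrow> 'a::field) \<Rightarrow> nat \<Rightarrow> nat \<Rightarrow> 'a poly" where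
  "lagrange_poly x n j = (\<Prod>i\<in>{..<n} - {j}. Polynomial.smult (1 / (x j - x i)) [:- x i, 1:])"

lemma poly_lagrange_poly: "poly (lagrange_poly x n j) t = (\<Prod>i\<in>{..<n} - {j}. (t - x i) / (x j - x i))"
  by (simp add: lagrange_poly_def poly_prod diff_divide_distrib)

lemma lagrange_basis_eq_poly: "lagrange_basis x n j = poly (lagrange_poly x n j)"
  by (simp add: lagrange_basis_def poly_lagrange_poly fun_eq_iff)

lemma degree_lagrange_poly:
  assumes "j < n"
  shows "degree (lagrange_poly x n j) \<le> n - 1"
proof -
  have "degree (lagrange_poly x n j)
      \<le> sum (degree \<circ> (\<lambda>i. Polynomial.smult (1 / (x j - x i)) [:- x i, 1:])) ({..<n} - {j})"
    unfolding lagrange_poly_def by (rule degree_prod_sum_le) simp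
  also have "\<dots> \<le> (\<Sum>i\<in>{..<n} - {j}. 1)"
    by (rule sum_mono) (simp add: order.trans[OF degree_smult_le])
  finally show ?thesis using assms by simp
qed

lemma poly_lagrange_poly_node:
  assumes "inj_on x {..<n}" "j < n" "l < n"
  shows "poly (lagrange_poly x n j) (x l) = (if l = j then 1 else 0)"
proof (cases "l = j")
  case True
  have "x j \<noteq> x i" if "i \<in> {..<n} - {j}" for i
    using that assms inj_onD[of x "{..<n}" j i] by auto
  then show ?thesis
    using True by (simp add: poly_lagrange_poly)
next
  case False
  then show ?thesis
    using assms by (auto simp: poly_lagrange_poly intro!: prod_zero bexI[of _ l])
qed

lemma lagrange_interpolation:
  assumes inj: "inj_on x {..<n}" and deg: "degree r < n"
  shows "r = (\<Sum>j<n. Polynomial.smult (poly r (x j)) (lagrange_poly x n j))"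
proof (rule poly_eqI_degree[of "x ` {..<n}"])
  fix t assume "t \<in> x ` {..<n}"
  then obtain l where "l < n" "t = x l" by auto
  then show "poly r t = poly (\<Sum>j<n. Polynomial.smult (poly r (x j)) (lagrange_poly x n j)) t"
    by (simp add: poly_sum poly_lagrange_poly_node[OF inj] if_distrib cong: if_cong)
next
  have card: "card (x ` {..<n}) = n"
    using card_image[OF inj] by simp
  then show "degree r < card (x ` {..<n})"
    using deg by simp
  have "degree (\<Sum>j<n. Polynomial.smult (poly r (x j)) (lagrange_poly x n j)) \<le> n - 1"
    by (intro degree_sum_le order.trans[OF degree_smult_le] degree_lagrange_poly) auto
  then show "degree (\<Sum>j<n. Polynomial.smult (poly r (x j)) (lagrange_poly x n j)) < card (x ` {..<n})"
    using card deg by linarith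
qed

lemma interpolatory_quadrature_exact:
  assumes "inj_on x {..<n}" "degree r < n"
  shows "(\<Sum>j<n. quad_weight x n j * poly r (x j)) = integral01 r"
  using arg_cong[where f = integral01, OF lagrange_interpolation[OF assms]]
  by (simp add: integral01_sum integral01_smult quad_weight_def lagrange_basis_eq_poly mult.commute
      flip: integral01_def)

lemma set_gauss_nodes: "set (gauss_nodes s) = {x. poly (shifted_legendre s) x = 0}"
  and length_gauss_nodes: "length (gauss_nodes s) = s"
  and distinct_gauss_nodes: "distinct (gauss_nodes s)"
  using shifted_legendre_roots[of s] poly_roots_finite[OF shifted_legendre_nonzero[of s]]
  by (simp_all add: gauss_nodes_def)

lemma inj_on_gauss_nodes: "inj_on ((!) (gauss_nodes s)) {..<s}"
  using length_gauss_nodes distinct_gauss_nodes by (auto simp: inj_on_def nth_eq_iff_index_eq)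

lemma gauss_node_root: "i < s \<Longrightarrow> poly (shifted_legendre s) (gauss_nodes s ! i) = 0"
  using set_gauss_nodes[of s] length_gauss_nodes[of s] nth_mem[of i "gauss_nodes s"] by simp

lemma gauss_node_bounds: "i < s \<Longrightarrow> gauss_nodes s ! i \<in> {0<..<1}"
  using gauss_node_root shifted_legendre_roots(2) by blast

text \<open>Divide by the Legendre polynomial: the quotient is orthogonal to it and the remainder is
  integrated exactly because it interpolates at the nodes, which are zeros of the divisor.\<close>
lemma gauss_quadrature_exact:
  assumes s: "0 < s" and deg: "degree p \<le> 2 * s - 1"
  shows "(\<Sum>j<s. quad_weight ((!) (gauss_nodes s)) s j * poly p (gauss_nodes s ! j))
       = integral {0..1} (poly p)"
proof -
  define L where "L = shifted_legendre s"
  define q where "q = p div L"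
  define r where "r = p mod L"
  have L: "L \<noteq> 0" "degree L = s"
    by (simp_all add: L_def shifted_legendre_nonzero)
  have p: "p = q * L + r"
    by (simp add: q_def r_def)
  have r: "degree r < s"
    using degree_mod_less'[OF L(1), of p] L(2) s by (cases "r = 0") (auto simp: r_def)
  have q: "degree q < s"
  proof (cases "q = 0")
    case False
    have "degree q + s = degree (p - r)"
      using p degree_mult_eq[OF False L(1)] L(2) by simp
    also have "\<dots> \<le> 2 * s - 1"
      using degree_diff_le_max[of p r] deg r by linarith
    finally show ?thesis using s by linarith
  qed (use s in simp)
  have "integral {0..1} (poly p) = integral01 (q * L) + integral01 r"
    by (simp add: p integral01_add flip: integral01_def)
  also have "integral01 (q * L) = 0"
    using integral01_mult_shifted_legendre_eq_0[OF q] by (simp add: L_def)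
  also have "integral01 r = (\<Sum>j<s. quad_weight ((!) (gauss_nodes s)) s j * poly r (gauss_nodes s ! j))"
    using interpolatory_quadrature_exact[OF inj_on_gauss_nodes r] by simp
  also have "\<dots> = (\<Sum>j<s. quad_weight ((!) (gauss_nodes s)) s j * poly p (gauss_nodes s ! j))"
    by (simp add: p L_def gauss_node_root)
  finally show ?thesis by simp
qed

definition leg_poly :: "nat \<Rightarrow> real poly" where
  "leg_poly j = Polynomial.smult (sqrt (2 * real j + 1)) (shifted_legendre j)"

lemma leg_P_eq_poly: "leg_P j = poly (leg_poly j)"
  by (simp add: leg_P_def leg_poly_def fun_eq_iff)

lemma degree_leg_poly [simp]: "degree (leg_poly j) = j"
  by (simp add: leg_poly_def)

lemma integral01_leg_poly_orthonormal:
  "integral01 (leg_poly i * leg_poly j) = (if i = j then 1 else 0)"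
proof -
  have "integral01 (leg_poly i * leg_poly j) = 0" if "i < j" for i j
    using integral01_mult_shifted_legendre_eq_0[of "shifted_legendre i" j] that
    by (simp add: leg_poly_def integral01_smult)
  moreover have "integral01 (leg_poly i * leg_poly i) = 1"
    by (simp add: leg_poly_def integral01_smult integral01_shifted_legendre_square)
  ultimately show ?thesis
    by (metis linorder_neqE_nat mult.commute)
qed

lemma leg_poly_span:
  assumes "\<forall>i\<ge>n. coeff p i = 0"
  obtains a where "p = (\<Sum>m<n. Polynomial.smult (a m) (leg_poly m))"
  using assms
proof (induction n arbitrary: p thesis)
  case 0
  then have "p = 0" by (intro poly_eqI) simp
  with "0.prems"(1) show ?case by simp
next
  case (Suc n)
  define c where "c = coeff p n / coeff (leg_poly n) n"
  have "coeff (leg_poly n) n \<noteq> 0"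
    by (simp add: leg_poly_def lead_coeff_shifted_legendre)
  moreover have "coeff (leg_poly n) i = 0" "coeff p i = 0" if "n < i" for i
    using that Suc.prems(2) by (simp_all add: coeff_eq_0)
  ultimately have "\<forall>i\<ge>n. coeff (p - Polynomial.smult c (leg_poly n)) i = 0"
    by (auto simp: c_def le_less)
  then obtain a where "p - Polynomial.smult c (leg_poly n) = (\<Sum>m<n. Polynomial.smult (a m) (leg_poly m))"
    using Suc.IH by blast
  then have "p = (\<Sum>m<Suc n. Polynomial.smult ((a(n := c)) m) (leg_poly m))"
    by (simp add: algebra_simps)
  then show ?case by (rule Suc.prems(1))
qed

lemma leg_poly_expansion:
  assumes "degree p < n"
  shows "p = (\<Sum>m<n. Polynomial.smult (integral01 (p * leg_poly m)) (leg_poly m))"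
proof -
  obtain a where a: "p = (\<Sum>m<n. Polynomial.smult (a m) (leg_poly m))"
    by (rule leg_poly_span[of n p]) (use assms in \<open>auto intro: coeff_eq_0\<close>)
  have "integral01 (p * leg_poly m) = a m" if "m < n" for m
    using that by (subst a) (simp add: sum_distrib_right integral01_sum integral01_smult
        integral01_leg_poly_orthonormal if_distrib cong: if_cong)
  then show ?thesis
    using a by simp
qed

lemma nonzero_eigenvalues_mult_commute:
  fixes A B :: "'a::field mat"
  assumes A: "A \<in> carrier_mat k s" and B: "B \<in> carrier_mat s k"
  shows "{z. eigenvalue (A * B) z \<and> z \<noteq> 0} = {z. eigenvalue (B * A) z \<and> z \<noteq> 0}"
proof -
  have swap: "eigenvalue (Y * X) z"
    if X: "X \<in> carrier_mat n m" and Y: "Y \<in> carrier_mat m n" and "z \<noteq> 0" and "eigenvalue (X * Y) z"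
    for X Y :: "'a mat" and n m z
  proof -
    obtain v where v: "v \<in> carrier_vec n" "v \<noteq> 0\<^sub>v n" "(X * Y) *\<^sub>v v = z \<cdot>\<^sub>v v"
      using \<open>eigenvalue (X * Y) z\<close> X Y by (auto simp: eigenvalue_def eigenvector_def)
    define w where "w = Y *\<^sub>v v"
    have w: "w \<in> carrier_vec m" "X *\<^sub>v w = z \<cdot>\<^sub>v v"
      using X Y v by (simp_all add: w_def)
    have "w \<noteq> 0\<^sub>v m"
    proof
      assume "w = 0\<^sub>v m"
      then have "z \<cdot>\<^sub>v v = 0\<^sub>v n"
        using w(2) X by (intro eq_vecI) (auto simp flip: w(2))
      then have "v = 0\<^sub>v n"
        using \<open>z \<noteq> 0\<close> v(1) by (intro eq_vecI) (auto simp: vec_eq_iff)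
      then show False using v(2) by simp
    qed
    moreover have "(Y * X) *\<^sub>v w = z \<cdot>\<^sub>v w"
      using X Y v w by (simp add: w_def mult_mat_vec)
    ultimately show ?thesis
      using w(1) Y X by (auto simp: eigenvalue_def eigenvector_def)
  qed
  show ?thesis
    using swap[OF A B] swap[OF B A] by blast
qed

definition hbvm_right_factor :: "(nat \<Rightarrow> real) \<Rightarrow> nat \<Rightarrow> nat \<Rightarrow> real mat" where
  "hbvm_right_factor tau k s = mat s k (\<lambda>(i, l). leg_P i (tau l) * quad_weight tau k l)"

definition legendre_integral_mat :: "nat \<Rightarrow> real mat" where
  "legendre_integral_mat s = mat s s (\<lambda>(i, j). integral01 (leg_poly i * poly_antideriv (leg_poly j)))"

lemma hbvm_matrix_factor: "hbvm_matrix tau k s = I_mat tau k s * hbvm_right_factor tau k s"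
proof -
  have "transpose_mat (P_mat tau k s) * Omega_mat tau k = hbvm_right_factor tau k s"
    by (rule eq_matI)
      (auto simp: P_mat_def Omega_mat_def hbvm_right_factor_def scalar_prod_def if_distrib
        cong: if_cong)
  then show ?thesis
    unfolding hbvm_matrix_def
    by (subst assoc_mult_mat[of _ k s _ k _ k]) (auto simp: I_mat_def P_mat_def Omega_mat_def)
qed

lemma hbvm_right_factor_mult_I_mat:
  assumes nonneg: "\<And>i. i < k \<Longrightarrow> 0 \<le> tau i"
    and exact: "\<And>p :: real poly. degree p \<le> 2 * s - 1 \<Longrightarrow>
           (\<Sum>j<k. quad_weight tau k j * poly p (tau j)) = integral {0..1} (poly p)"
  shows "hbvm_right_factor tau k s * I_mat tau k s = legendre_integral_mat s"
proof (rule eq_matI)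
  fix i j assume "i < dim_row (legendre_integral_mat s)" "j < dim_col (legendre_integral_mat s)"
  then have i: "i < s" and j: "j < s" by (simp_all add: legendre_integral_mat_def)
  have deg: "degree (leg_poly i * poly_antideriv (leg_poly j)) \<le> 2 * s - 1"
    using degree_mult_le[of "leg_poly i" "poly_antideriv (leg_poly j)"]
      degree_poly_antideriv[of "leg_poly j"] i j by simp
  have "(\<Sum>l<k. quad_weight tau k l * poly (leg_poly i * poly_antideriv (leg_poly j)) (tau l))
      = integral01 (leg_poly i * poly_antideriv (leg_poly j))"
    using exact[OF deg] by (simp add: integral01_def)
  then show "(hbvm_right_factor tau k s * I_mat tau k s) $$ (i, j) = legendre_integral_mat s $$ (i, j)"
    using i j nonneg
    by (simp add: hbvm_right_factor_def I_mat_def legendre_integral_mat_def scalar_prod_def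
        leg_P_eq_poly integral_poly_eq_antideriv atLeast0LessThan mult_ac)
qed (simp_all add: hbvm_right_factor_def I_mat_def legendre_integral_mat_def)

lemma nonzero_eigenvalues_hbvm_matrix:
  assumes "\<And>i. i < k \<Longrightarrow> 0 \<le> tau i"
    and "\<And>p :: real poly. degree p \<le> 2 * s - 1 \<Longrightarrow>
           (\<Sum>j<k. quad_weight tau k j * poly p (tau j)) = integral {0..1} (poly p)"
  shows "{z. eigenvalue (map_mat complex_of_real (hbvm_matrix tau k s)) z \<and> z \<noteq> 0}
       = {z. eigenvalue (map_mat complex_of_real (legendre_integral_mat s)) z \<and> z \<noteq> 0}"
proof -
  have carriers: "I_mat tau k s \<in> carrier_mat k s" "hbvm_right_factor tau k s \<in> carrier_mat s k"
    by (simp_all add: I_mat_def hbvm_right_factor_def)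
  have "map_mat complex_of_real (hbvm_matrix tau k s)
      = map_mat of_real (I_mat tau k s) * map_mat of_real (hbvm_right_factor tau k s)"
    unfolding hbvm_matrix_factor by (rule of_real_hom.mat_hom_mult[OF carriers])
  moreover have "map_mat complex_of_real (legendre_integral_mat s)
      = map_mat of_real (hbvm_right_factor tau k s) * map_mat of_real (I_mat tau k s)"
    using hbvm_right_factor_mult_I_mat[OF assms] of_real_hom.mat_hom_mult[OF carriers(2,1)]
    by simp
  ultimately show ?thesis
    using carriers by (simp add: nonzero_eigenvalues_mult_commute)
qed

text \<open>Gauss quadrature computes the Legendre coefficients of a Lagrange polynomial exactly.\<close>
lemma lagrange_poly_gauss_nodes_expansion:
  assumes s: "0 < s" and j: "j < s"
  shows "lagrange_poly ((!) (gauss_nodes s)) s j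
       = (\<Sum>m<s. Polynomial.smult (quad_weight ((!) (gauss_nodes s)) s j * leg_P m (gauss_nodes s ! j))
                                 (leg_poly m))"
proof -
  let ?c = "(!) (gauss_nodes s)" and ?l = "lagrange_poly ((!) (gauss_nodes s)) s j"
  have deg: "degree ?l < s"
    using degree_lagrange_poly[OF j, of ?c] s by linarith
  have "integral01 (?l * leg_poly m) = quad_weight ?c s j * leg_P m (?c j)" if "m < s" for m
  proof -
    have "degree (?l * leg_poly m) \<le> 2 * s - 1"
      using degree_mult_le[of ?l "leg_poly m"] deg that by simp
    then have "integral01 (?l * leg_poly m)
        = (\<Sum>l<s. quad_weight ?c s l * (poly ?l (?c l) * poly (leg_poly m) (?c l)))"
      by (simp add: integral01_def flip: gauss_quadrature_exact[OF s])
    also have "\<dots> = (\<Sum>l<s. if l = j then quad_weight ?c s l * leg_P m (?c l) else 0)"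
      using j by (intro sum.cong) (simp_all add: poly_lagrange_poly_node[OF inj_on_gauss_nodes] leg_P_eq_poly)
    also have "\<dots> = quad_weight ?c s j * leg_P m (?c j)"
      using j by simp
    finally show ?thesis .
  qed
  then show ?thesis
    using leg_poly_expansion[OF deg] by simp
qed

lemma gauss_butcher_eq_hbvm_matrix:
  assumes "0 < s"
  shows "gauss_butcher s = hbvm_matrix ((!) (gauss_nodes s)) s s"
proof (rule eq_matI)
  fix i j assume "i < dim_row (hbvm_matrix ((!) (gauss_nodes s)) s s)"
    "j < dim_col (hbvm_matrix ((!) (gauss_nodes s)) s s)"
  then have i: "i < s" and j: "j < s"
    by (simp_all add: hbvm_matrix_factor I_mat_def hbvm_right_factor_def)
  have "0 \<le> gauss_nodes s ! i"
    using gauss_node_bounds[OF i] by simp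
  then show "gauss_butcher s $$ (i, j) = hbvm_matrix ((!) (gauss_nodes s)) s s $$ (i, j)"
    using i j
    by (simp add: gauss_butcher_def hbvm_matrix_factor I_mat_def hbvm_right_factor_def
        scalar_prod_def lagrange_basis_eq_poly integral_poly_eq_antideriv leg_P_eq_poly
        lagrange_poly_gauss_nodes_expansion[OF assms j] poly_antideriv_sum poly_antideriv_smult
        poly_sum atLeast0LessThan mult_ac)
qed (simp_all add: gauss_butcher_def hbvm_matrix_factor I_mat_def hbvm_right_factor_def)

text \<open>A kernel vector [v] gives the polynomial [p] with values [v] at the nodes; the antiderivative of
  [p] vanishes at [0] and at the [s] nodes, so it is zero, hence so are [p] and [v].\<close>
lemma det_gauss_butcher_nonzero:
  assumes s: "0 < s"
  shows "det (gauss_butcher s) \<noteq> 0"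
proof
  let ?c = "(!) (gauss_nodes s)"
  have G: "gauss_butcher s \<in> carrier_mat s s"
    by (simp add: gauss_butcher_def)
  assume "det (gauss_butcher s) = 0"
  then obtain v where v: "v \<in> carrier_vec s" "v \<noteq> 0\<^sub>v s" "gauss_butcher s *\<^sub>v v = 0\<^sub>v s"
    using det_0_iff_vec_prod_zero[OF G] by auto
  define p where "p = (\<Sum>j<s. Polynomial.smult (v $ j) (lagrange_poly ?c s j))"
  have deg: "degree p \<le> s - 1"
    unfolding p_def
    by (intro degree_sum_le order.trans[OF degree_smult_le] degree_lagrange_poly) auto
  have "poly (poly_antideriv p) (?c i) = (gauss_butcher s *\<^sub>v v) $ i" if i: "i < s" for i
    using i v(1) gauss_node_bounds[OF i]
    by (simp add: p_def gauss_butcher_def scalar_prod_def lagrange_basis_eq_poly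
        integral_poly_eq_antideriv poly_antideriv_sum poly_antideriv_smult poly_sum
        atLeast0LessThan mult.commute)
  then have roots: "poly (poly_antideriv p) t = 0" if "t \<in> insert 0 (?c ` {..<s})" for t
    using that v(3) by auto
  have "0 \<notin> ?c ` {..<s}"
    using gauss_node_bounds by fastforce
  then have "card (insert 0 (?c ` {..<s})) = Suc s"
    using card_image[OF inj_on_gauss_nodes] by simp
  then have "poly_antideriv p = 0"
    using roots degree_poly_antideriv[of p] deg s
    by (intro poly_eqI_degree[of "insert 0 (?c ` {..<s})"]) auto
  then have "p = 0"
    using pderiv_poly_antideriv[of p] by simp
  have "v $ l = 0" if l: "l < s" for l
  proof -
    have "0 = poly p (?c l)"
      using \<open>p = 0\<close> by simp
    also have "\<dots> = v $ l"
      using l by (simp add: p_def poly_sum poly_lagrange_poly_node[OF inj_on_gauss_nodes] if_distrib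
          cong: if_cong)
    finally show ?thesis by simp
  qed
  then have "v = 0\<^sub>v s"
    using v(1) by (intro eq_vecI) auto
  with v(2) show False by simp
qed

lemma gauss_butcher_no_zero_eigenvalue:
  assumes "0 < s"
  shows "\<not> eigenvalue (map_mat complex_of_real (gauss_butcher s)) 0"
proof
  let ?G = "map_mat complex_of_real (gauss_butcher s)"
  have G: "?G \<in> carrier_mat s s"
    by (simp add: gauss_butcher_def)
  assume "eigenvalue ?G 0"
  moreover have "char_matrix ?G 0 = ?G"
    using G by (intro eq_matI) (auto simp: char_matrix_def)
  ultimately have "det ?G = 0"
    by (simp add: eigenvalue_det[OF G])
  then have "det (gauss_butcher s) = 0"
    by (simp add: of_real_hom.hom_det)
  with det_gauss_butcher_nonzero[OF assms] show False by simp
qed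

theorem theorem1:
  fixes s k :: nat and tau :: "nat \<Rightarrow> real"
  assumes "0 < s" and "s \<le> k"
    and "inj_on tau {..<k}"
    and "\<And>i. i < k \<Longrightarrow> tau i \<in> {0<..1}"
    and "\<And>p :: real poly. degree p \<le> 2 * s - 1 \<Longrightarrow>
           (\<Sum>j<k. quad_weight tau k j * poly p (tau j)) = integral {0..1} (poly p)"
  shows "{z. eigenvalue (map_mat complex_of_real (hbvm_matrix tau k s)) z \<and> z \<noteq> 0}
       = {z. eigenvalue (map_mat complex_of_real (gauss_butcher s)) z}"
proof -
  have tau_nonneg: "0 \<le> tau i" if "i < k" for i
    using assms(4)[OF that] by simp
  have gauss_nonneg: "0 \<le> gauss_nodes s ! i" if "i < s" for i
    using gauss_node_bounds[OF that] by simp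
  have "{z. eigenvalue (map_mat complex_of_real (hbvm_matrix tau k s)) z \<and> z \<noteq> 0}
      = {z. eigenvalue (map_mat complex_of_real (legendre_integral_mat s)) z \<and> z \<noteq> 0}"
    using tau_nonneg assms(5) by (rule nonzero_eigenvalues_hbvm_matrix)
  also have "\<dots> = {z. eigenvalue (map_mat complex_of_real (hbvm_matrix ((!) (gauss_nodes s)) s s)) z
      \<and> z \<noteq> 0}"
    using gauss_nonneg gauss_quadrature_exact[OF assms(1)]
    by (rule nonzero_eigenvalues_hbvm_matrix[symmetric])
  also have "\<dots> = {z. eigenvalue (map_mat complex_of_real (gauss_butcher s)) z}"
    using gauss_butcher_no_zero_eigenvalue[OF assms(1)]
    by (auto simp: gauss_butcher_eq_hbvm_matrix[OF assms(1)])
  finally show ?thesis .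
qed

end
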